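(* Let $G=(V_G,E_G)$ and $H=(V_H,E_H)$ be two vertex-disjoint directed co-graphs. Then $\mathrm{pw}(\mathrm{un}(G\oslash H))>\mathrm{dpw}(G\oslash H)$.
   Context: Digraphs are finite, without loops or multiple arcs. Operations on vertex-disjoint digraphs $G_1,\ldots,G_k$: disjoint union $\oplus$ (union of vertex and arc sets); series composition $\otimes$ (disjoint union plus all arcs in both directions between vertices of different $G_i$); order composition $G_1\oslash\cdots\oslash G_k$ (disjoint union plus all arcs from vertices of $G_i$ to vertices of $G_j$ for $i<j$). Directed co-graphs: every single-vertex digraph, and closure under these three operations. $\mathrm{un}(G)$ is the underlying undirected graph of $G$ (edge $\{u,v\}$ iff $(u,v)$ or $(v,u)$ is an arc), and $\mathrm{pw}$ denotes the usual (undirected) path-width. A directed path-decomposition of $G=(V,E)$ is a sequence $(X_1,\ldots,X_r)$ of subsets of $V$ with $\bigcup X_i=V$, for each arc $(u,v)$ some $i\le j$ with $u\in X_i,v\in X_j$, and for each vertex the bags containing it having consecutive indices; width $\max|X_i|-1$; $\mathrm{dpw}(G)$ is the minimum width. *)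

theory Defs
  imports Main
begin

type_synonym 'a digraph = "'a set \<times> ('a \<times> 'a) set"

definition verts :: "'a digraph \<Rightarrow> 'a set" where "verts G = fst G"
definition arcs :: "'a digraph \<Rightarrow> ('a \<times> 'a) set" where "arcs G = snd G"

definition disj_union :: "'a digraph \<Rightarrow> 'a digraph \<Rightarrow> 'a digraph" where
  "disj_union G1 G2 = (verts G1 \<union> verts G2, arcs G1 \<union> arcs G2)"

definition series_comp :: "'a digraph \<Rightarrow> 'a digraph \<Rightarrow> 'a digraph" where
  "series_comp G1 G2 = (verts G1 \<union> verts G2,
     arcs G1 \<union> arcs G2 \<union> (verts G1 \<times> verts G2) \<union> (verts G2 \<times> verts G1))"

definition order_comp :: "'a digraph \<Rightarrow> 'a digraph \<Rightarrow> 'a digraph" where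
  "order_comp G1 G2 = (verts G1 \<union> verts G2,
     arcs G1 \<union> arcs G2 \<union> (verts G1 \<times> verts G2))"

inductive dcograph :: "'a digraph \<Rightarrow> bool" where
  single: "dcograph ({v}, {})"
| dunion: "\<lbrakk>dcograph G1; dcograph G2; verts G1 \<inter> verts G2 = {}\<rbrakk>
            \<Longrightarrow> dcograph (disj_union G1 G2)"
| series: "\<lbrakk>dcograph G1; dcograph G2; verts G1 \<inter> verts G2 = {}\<rbrakk>
            \<Longrightarrow> dcograph (series_comp G1 G2)"
| order: "\<lbrakk>dcograph G1; dcograph G2; verts G1 \<inter> verts G2 = {}\<rbrakk>
            \<Longrightarrow> dcograph (order_comp G1 G2)"

type_synonym 'a ugraph = "'a set \<times> 'a set set"

definition un :: "'a digraph \<Rightarrow> 'a ugraph" where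
  "un G = (verts G, {{u, v} | u v. (u, v) \<in> arcs G \<or> (v, u) \<in> arcs G})"

definition bags_ok :: "'a set \<Rightarrow> 'a set list \<Rightarrow> bool" where
  "bags_ok V Xs \<longleftrightarrow> Xs \<noteq> [] \<and> (\<forall>X\<in>set Xs. X \<subseteq> V) \<and> \<Union>(set Xs) = V \<and>
     (\<forall>v i j k. i \<le> j \<and> j \<le> k \<and> k < length Xs \<and> v \<in> Xs ! i \<and> v \<in> Xs ! k
        \<longrightarrow> v \<in> Xs ! j)"

definition bags_width :: "'a set list \<Rightarrow> nat" where
  "bags_width Xs = Max (card ` set Xs) - 1"

definition is_path_decomp :: "'a ugraph \<Rightarrow> 'a set list \<Rightarrow> bool" where
  "is_path_decomp G Xs \<longleftrightarrow> bags_ok (fst G) Xs \<and>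
     (\<forall>e\<in>snd G. \<exists>i<length Xs. e \<subseteq> Xs ! i)"

definition pw :: "'a ugraph \<Rightarrow> nat" where
  "pw G = (LEAST w. \<exists>Xs. is_path_decomp G Xs \<and> bags_width Xs = w)"

definition is_dir_path_decomp :: "'a digraph \<Rightarrow> 'a set list \<Rightarrow> bool" where
  "is_dir_path_decomp G Xs \<longleftrightarrow> bags_ok (verts G) Xs \<and>
     (\<forall>(u, v)\<in>arcs G. \<exists>i j. i \<le> j \<and> j < length Xs \<and> u \<in> Xs ! i \<and> v \<in> Xs ! j)"

definition dpw :: "'a digraph \<Rightarrow> nat" where
  "dpw G = (LEAST w. \<exists>Xs. is_dir_path_decomp G Xs \<and> bags_width Xs = w)"

end

theory Submission
  imports Defs
begin

(* In un(G \<oslash> H) every vertex of G is adjacent to every vertex of H. Replace an optimal path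
   decomposition of it by the G-parts of the bags that meet H, followed by the H-parts of the
   bags that meet G. Every new bag is a proper subset of an old one, so the width drops. Each
   vertex of G shares a bag with a fixed vertex h of H; as the bags containing a vertex form an
   interval, the Helly property of intervals puts the ends of every arc of G into a common bag
   with h, so the arc survives the restriction; symmetrically for H. Arcs from G to H point
   forward because the G-parts come first. The hypothesis that G and H are co-graphs is only
   used to know that they are finite, nonempty digraphs. *)

lemma verts_order_comp [simp]: "verts (order_comp G H) = verts G \<union> verts H"
  by (simp add: order_comp_def verts_def)

lemma arcs_order_comp [simp]: "arcs (order_comp G H) = arcs G \<union> arcs H \<union> verts G \<times> verts H"
  by (simp add: order_comp_def arcs_def verts_def)

lemma dcograph_finite: "dcograph G \<Longrightarrow> finite (verts G)"
  by (induction rule: dcograph.induct)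
     (auto simp: verts_def disj_union_def series_comp_def order_comp_def)

lemma dcograph_nonempty: "dcograph G \<Longrightarrow> verts G \<noteq> {}"
  by (induction rule: dcograph.induct)
     (auto simp: verts_def disj_union_def series_comp_def order_comp_def)

lemma dcograph_arcs_subset: "dcograph G \<Longrightarrow> arcs G \<subseteq> verts G \<times> verts G"
  by (induction rule: dcograph.induct)
     (auto simp: verts_def arcs_def disj_union_def series_comp_def order_comp_def)

definition bags_consecutive :: "'a set list \<Rightarrow> bool" where
  "bags_consecutive Xs \<longleftrightarrow>
     (\<forall>i j k. i \<le> j \<and> j \<le> k \<and> k < length Xs \<longrightarrow> Xs ! i \<inter> Xs ! k \<subseteq> Xs ! j)"

lemma bags_ok_iff:
  "bags_ok V Xs \<longleftrightarrow>
     Xs \<noteq> [] \<and> (\<forall>X\<in>set Xs. X \<subseteq> V) \<and> \<Union>(set Xs) = V \<and> bags_consecutive Xs"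
  unfolding bags_ok_def bags_consecutive_def by blast

lemma bags_consecutiveD:
  assumes "bags_consecutive Xs" "min i k \<le> j" "j \<le> max i k" "i < length Xs" "k < length Xs"
    "v \<in> Xs ! i" "v \<in> Xs ! k"
  shows "v \<in> Xs ! j"
  using assms unfolding bags_consecutive_def by (cases "i \<le> k") (auto simp: min_def max_def)

lemma bags_consecutive_Helly:
  assumes cons: "bags_consecutive Xs"
    and "\<exists>X\<in>set Xs. u \<in> X \<and> v \<in> X" "\<exists>X\<in>set Xs. v \<in> X \<and> w \<in> X"
      "\<exists>X\<in>set Xs. u \<in> X \<and> w \<in> X"
  shows "\<exists>X\<in>set Xs. u \<in> X \<and> v \<in> X \<and> w \<in> X"
proof -
  obtain a b c where abc: "a < length Xs" "b < length Xs" "c < length Xs"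
    "u \<in> Xs ! a" "v \<in> Xs ! a" "v \<in> Xs ! b" "w \<in> Xs ! b" "u \<in> Xs ! c" "w \<in> Xs ! c"
    using assms(2-4) by (auto simp: in_set_conv_nth)
  \<comment> \<open>the median of a, b and c lies between any two of them\<close>
  define m where "m = max (min a b) (min (max a b) c)"
  have between: "min a c \<le> m" "m \<le> max a c" "min a b \<le> m" "m \<le> max a b"
    "min b c \<le> m" "m \<le> max b c"
    by (simp_all add: m_def min_def max_def)
  have "m < length Xs" using abc(1-3) by (simp add: m_def min_def max_def)
  moreover have "u \<in> Xs ! m" using bags_consecutiveD[OF cons between(1,2)] abc by blast
  moreover have "v \<in> Xs ! m" using bags_consecutiveD[OF cons between(3,4)] abc by blast
  moreover have "w \<in> Xs ! m" using bags_consecutiveD[OF cons between(5,6)] abc by blast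
  ultimately show ?thesis by (metis nth_mem)
qed

lemma bags_consecutive_map_nth:
  assumes "bags_consecutive Xs" "sorted idx" "\<forall>i\<in>set idx. i < length Xs"
  shows "bags_consecutive (map ((!) Xs) idx)"
  unfolding bags_consecutive_def
proof (intro allI impI)
  fix i j k assume ijk: "i \<le> j \<and> j \<le> k \<and> k < length (map ((!) Xs) idx)"
  then have "idx ! i \<le> idx ! j" "idx ! j \<le> idx ! k" "idx ! k < length Xs"
    using assms(2,3) by (simp_all add: sorted_nth_mono)
  then show "map ((!) Xs) idx ! i \<inter> map ((!) Xs) idx ! k \<subseteq> map ((!) Xs) idx ! j"
    using assms(1) ijk unfolding bags_consecutive_def by auto
qed

lemma bags_consecutive_filter:
  assumes "bags_consecutive Xs"
  shows "bags_consecutive (filter P Xs)"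
proof -
  have "filter P Xs = map ((!) Xs) (filter (P \<circ> (!) Xs) [0..<length Xs])"
    by (metis filter_map map_nth)
  with assms show ?thesis
    by (simp add: bags_consecutive_map_nth sorted_wrt_filter)
qed

lemma bags_consecutive_map_Int:
  "bags_consecutive Xs \<Longrightarrow> bags_consecutive (map (\<lambda>X. X \<inter> C) Xs)"
  unfolding bags_consecutive_def by auto

lemma bags_consecutive_append:
  assumes "bags_consecutive Xs" "bags_consecutive Ys" "\<Union>(set Xs) \<inter> \<Union>(set Ys) = {}"
  shows "bags_consecutive (Xs @ Ys)"
  unfolding bags_consecutive_def
proof (intro allI impI subsetI)
  fix i j k v
  assume ijk: "i \<le> j \<and> j \<le> k \<and> k < length (Xs @ Ys)"
    and v: "v \<in> (Xs @ Ys) ! i \<inter> (Xs @ Ys) ! k"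
  consider "k < length Xs" | "length Xs \<le> i" | "i < length Xs" "length Xs \<le> k" by linarith
  then show "v \<in> (Xs @ Ys) ! j"
  proof cases
    case 1
    then show ?thesis
      using assms(1) ijk v unfolding bags_consecutive_def by (auto simp: nth_append)
  next
    case 2
    then have "i - length Xs \<le> j - length Xs" "j - length Xs \<le> k - length Xs"
      "k - length Xs < length Ys"
      using ijk by auto
    then show ?thesis
      using 2 assms(2) ijk v unfolding bags_consecutive_def by (auto simp: nth_append)
  next
    case 3
    then have "v \<in> \<Union>(set Xs)" "v \<in> \<Union>(set Ys)"
      using ijk v by (auto simp: nth_append)
    with assms(3) show ?thesis by blast
  qed
qed

definition occurs_before :: "'a set list \<Rightarrow> 'a \<Rightarrow> 'a \<Rightarrow> bool" where
  "occurs_before Xs u v \<longleftrightarrow> (\<exists>i j. i \<le> j \<and> j < length Xs \<and> u \<in> Xs ! i \<and> v \<in> Xs ! j)"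

lemma is_dir_path_decomp_iff:
  "is_dir_path_decomp G Xs \<longleftrightarrow>
     bags_ok (verts G) Xs \<and> (\<forall>(u, v)\<in>arcs G. occurs_before Xs u v)"
  unfolding is_dir_path_decomp_def occurs_before_def ..

lemma occurs_before_same_bag:
  "X \<in> set Xs \<Longrightarrow> u \<in> X \<Longrightarrow> v \<in> X \<Longrightarrow> occurs_before Xs u v"
  unfolding occurs_before_def by (metis in_set_conv_nth order_refl)

lemma occurs_before_append:
  assumes "u \<in> \<Union>(set Xs)" "v \<in> \<Union>(set Ys)"
  shows "occurs_before (Xs @ Ys) u v"
proof -
  obtain i k where "i < length Xs" "u \<in> Xs ! i" "k < length Ys" "v \<in> Ys ! k"
    using assms by (auto simp: in_set_conv_nth)
  then show ?thesis
    unfolding occurs_before_def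
    by (intro exI[of _ i] exI[of _ "length Xs + k"]) (simp add: nth_append)
qed

lemma path_decomp_un_arc:
  assumes "is_path_decomp (un G) Xs" "(u, v) \<in> arcs G"
  shows "\<exists>X\<in>set Xs. u \<in> X \<and> v \<in> X"
proof -
  have "{u, v} \<in> snd (un G)" using assms(2) unfolding un_def snd_conv by blast
  then show ?thesis using assms(1) unfolding is_path_decomp_def by (metis insert_subset nth_mem)
qed

definition restrict_bags :: "'a set \<Rightarrow> 'a set \<Rightarrow> 'a set list \<Rightarrow> 'a set list" where
  "restrict_bags C D Xs = map (\<lambda>X. X \<inter> C) (filter (\<lambda>X. X \<inter> D \<noteq> {}) Xs)"

lemma bags_consecutive_restrict_bags:
  "bags_consecutive Xs \<Longrightarrow> bags_consecutive (restrict_bags C D Xs)"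
  unfolding restrict_bags_def by (intro bags_consecutive_map_Int bags_consecutive_filter)

lemma restrict_bags_psubset:
  "C \<inter> D = {} \<Longrightarrow> \<forall>Y\<in>set (restrict_bags C D Xs). \<exists>X\<in>set Xs. Y \<subset> X"
  unfolding restrict_bags_def by auto

context
  fixes C D :: "'a set" and Xs :: "'a set list" and d :: 'a
  assumes d: "d \<in> D"
    and joined: "\<forall>c\<in>C. \<exists>X\<in>set Xs. c \<in> X \<and> d \<in> X"
begin

lemma Union_restrict_bags: "\<Union>(set (restrict_bags C D Xs)) = C"
  using d joined unfolding restrict_bags_def by fastforce

lemma restrict_bags_common_bag:
  assumes "bags_consecutive Xs" "u \<in> C" "v \<in> C" "\<exists>X\<in>set Xs. u \<in> X \<and> v \<in> X"
  shows "\<exists>Y\<in>set (restrict_bags C D Xs). u \<in> Y \<and> v \<in> Y"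
proof -
  obtain X where X: "X \<in> set Xs" "u \<in> X" "v \<in> X" "d \<in> X"
    using bags_consecutive_Helly[OF assms(1,4) bspec[OF joined assms(3)] bspec[OF joined assms(2)]]
    by blast
  have "X \<inter> C \<in> set (restrict_bags C D Xs)"
    using X(1,4) d unfolding restrict_bags_def set_map set_filter by (intro imageI) blast
  with X(2,3) assms(2,3) show ?thesis by blast
qed

end

lemma bags_width_less:
  assumes "Ys \<noteq> []" "\<forall>Y\<in>set Ys. \<exists>X\<in>set Xs. Y \<subset> X" "\<forall>X\<in>set Xs. finite X"
    and "Z \<in> set Xs" "2 \<le> card Z"
  shows "bags_width Ys < bags_width Xs"
proof -
  define M where "M = Max (card ` set Xs)"
  have le_M: "card X \<le> M" if "X \<in> set Xs" for X
    unfolding M_def using that by (intro Max_ge) simp_all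
  have "2 \<le> M" using le_M[OF assms(4)] assms(5) by linarith
  moreover have "card Y < M" if Y: "Y \<in> set Ys" for Y
  proof -
    obtain X where "X \<in> set Xs" "Y \<subset> X" using bspec[OF assms(2) Y] by (elim bexE)
    then have "card Y < card X" using assms(3) psubset_card_mono by blast
    also have "card X \<le> M" using le_M \<open>X \<in> set Xs\<close> .
    finally show ?thesis .
  qed
  then have "Max (card ` set Ys) < M" using assms(1) by simp
  ultimately show ?thesis by (simp add: bags_width_def M_def)
qed

lemma order_comp_dir_path_decomp_narrower:
  fixes G H :: "'a digraph"
  assumes fin: "finite (verts G)" "finite (verts H)"
    and ne: "verts G \<noteq> {}" "verts H \<noteq> {}"
    and wf: "arcs G \<subseteq> verts G \<times> verts G" "arcs H \<subseteq> verts H \<times> verts H"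
    and disj: "verts G \<inter> verts H = {}"
    and Xs: "is_path_decomp (un (order_comp G H)) Xs"
  shows "\<exists>Ys. is_dir_path_decomp (order_comp G H) Ys \<and> bags_width Ys < bags_width Xs"
proof -
  define A B where "A = verts G" and "B = verts H"
  obtain a b where ab: "a \<in> A" "b \<in> B" using ne by (auto simp: A_def B_def)
  have ok: "bags_ok (A \<union> B) Xs" using Xs by (simp add: is_path_decomp_def un_def A_def B_def)
  then have cons: "bags_consecutive Xs" by (simp add: bags_ok_iff)
  have share: "\<exists>X\<in>set Xs. u \<in> X \<and> v \<in> X" if "(u, v) \<in> arcs (order_comp G H)" for u v
    using path_decomp_un_arc[OF Xs that] .
  have joined: "\<exists>X\<in>set Xs. x \<in> X \<and> y \<in> X" if "x \<in> A" "y \<in> B" for x y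
    using share[of x y] that by (simp add: A_def B_def)
  have meets_b: "\<forall>x\<in>A. \<exists>X\<in>set Xs. x \<in> X \<and> b \<in> X" using joined ab(2) by blast
  have meets_a: "\<forall>y\<in>B. \<exists>X\<in>set Xs. y \<in> X \<and> a \<in> X" using joined ab(1) by blast
  define L1 L2 where "L1 = restrict_bags A B Xs" and "L2 = restrict_bags B A Xs"
  have U1: "\<Union>(set L1) = A" unfolding L1_def using ab(2) meets_b by (rule Union_restrict_bags)
  have U2: "\<Union>(set L2) = B" unfolding L2_def using ab(1) meets_a by (rule Union_restrict_bags)
  have common1: "\<exists>Y\<in>set L1. u \<in> Y \<and> v \<in> Y" if uv: "(u, v) \<in> arcs G" for u v
  proof -
    have "u \<in> A" "v \<in> A" using uv wf(1) by (auto simp: A_def)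
    moreover have "\<exists>X\<in>set Xs. u \<in> X \<and> v \<in> X" using share uv by simp
    ultimately show ?thesis
      unfolding L1_def by (rule restrict_bags_common_bag[OF ab(2) meets_b cons])
  qed
  have common2: "\<exists>Y\<in>set L2. u \<in> Y \<and> v \<in> Y" if uv: "(u, v) \<in> arcs H" for u v
  proof -
    have "u \<in> B" "v \<in> B" using uv wf(2) by (auto simp: B_def)
    moreover have "\<exists>X\<in>set Xs. u \<in> X \<and> v \<in> X" using share uv by simp
    ultimately show ?thesis
      unfolding L2_def by (rule restrict_bags_common_bag[OF ab(1) meets_a cons])
  qed
  have "bags_ok (A \<union> B) (L1 @ L2)"
    unfolding bags_ok_iff
  proof (intro conjI)
    show "L1 @ L2 \<noteq> []" using U1 ab(1) by auto
    show "\<Union>(set (L1 @ L2)) = A \<union> B" using U1 U2 by simp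
    then show "\<forall>X\<in>set (L1 @ L2). X \<subseteq> A \<union> B" by blast
    show "bags_consecutive (L1 @ L2)"
      using cons U1 U2 disj unfolding L1_def L2_def A_def B_def
      by (intro bags_consecutive_append bags_consecutive_restrict_bags) simp_all
  qed
  moreover have "occurs_before (L1 @ L2) u v" if uv: "(u, v) \<in> arcs (order_comp G H)" for u v
  proof -
    consider "(u, v) \<in> arcs G" | "(u, v) \<in> arcs H" | "u \<in> A" "v \<in> B"
      using uv by (auto simp: A_def B_def)
    then show ?thesis
    proof cases
      case 1
      then obtain Y where "Y \<in> set L1" "u \<in> Y" "v \<in> Y" using common1 by blast
      then show ?thesis by (intro occurs_before_same_bag[of Y]) auto
    next
      case 2
      then obtain Y where "Y \<in> set L2" "u \<in> Y" "v \<in> Y" using common2 by blast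
      then show ?thesis by (intro occurs_before_same_bag[of Y]) auto
    next
      case 3
      then show ?thesis using U1 U2 by (simp add: occurs_before_append)
    qed
  qed
  ultimately have dir: "is_dir_path_decomp (order_comp G H) (L1 @ L2)"
    unfolding is_dir_path_decomp_iff by (auto simp: A_def B_def)
  obtain Z where Z: "Z \<in> set Xs" "a \<in> Z" "b \<in> Z" using joined ab by blast
  have "bags_width (L1 @ L2) < bags_width Xs"
  proof (rule bags_width_less[where Z = Z])
    show "L1 @ L2 \<noteq> []" using U1 ab(1) by auto
    have "A \<inter> B = {}" "B \<inter> A = {}" using disj by (auto simp: A_def B_def)
    then show "\<forall>Y\<in>set (L1 @ L2). \<exists>X\<in>set Xs. Y \<subset> X"
      unfolding L1_def L2_def set_append ball_Un by (intro conjI restrict_bags_psubset)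
    show finite_bags: "\<forall>X\<in>set Xs. finite X"
      using ok fin unfolding bags_ok_iff A_def B_def by (meson finite_Un finite_subset)
    show "Z \<in> set Xs" by fact
    have "a \<noteq> b" using ab disj by (auto simp: A_def B_def)
    then have "card {a, b} \<le> card Z" using Z finite_bags by (intro card_mono) auto
    with \<open>a \<noteq> b\<close> show "2 \<le> card Z" by simp
  qed
  with dir show ?thesis by blast
qed

lemma is_path_decomp_un_single:
  "arcs G \<subseteq> verts G \<times> verts G \<Longrightarrow> is_path_decomp (un G) [verts G]"
  by (auto simp: is_path_decomp_def bags_ok_def un_def)

lemma pw_attained:
  assumes "is_path_decomp G Xs"
  obtains Ys where "is_path_decomp G Ys" "bags_width Ys = pw G"
  using LeastI_ex[of "\<lambda>w. \<exists>Xs. is_path_decomp G Xs \<and> bags_width Xs = w"] assms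
  unfolding pw_def by blast

lemma dpw_le: "is_dir_path_decomp G Xs \<Longrightarrow> dpw G \<le> bags_width Xs"
  unfolding dpw_def by (rule Least_le) blast

lemma dpw_order_comp_less_pw_un:
  fixes G H :: "'a digraph"
  assumes "finite (verts G)" "finite (verts H)" "verts G \<noteq> {}" "verts H \<noteq> {}"
    and wf: "arcs G \<subseteq> verts G \<times> verts G" "arcs H \<subseteq> verts H \<times> verts H"
    and "verts G \<inter> verts H = {}"
  shows "dpw (order_comp G H) < pw (un (order_comp G H))"
proof -
  have "arcs (order_comp G H) \<subseteq> verts (order_comp G H) \<times> verts (order_comp G H)"
    using wf by auto
  then obtain Xs where Xs: "is_path_decomp (un (order_comp G H)) Xs"
    "bags_width Xs = pw (un (order_comp G H))"
    using pw_attained is_path_decomp_un_single by metis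
  obtain Ys where "is_dir_path_decomp (order_comp G H) Ys" "bags_width Ys < bags_width Xs"
    using order_comp_dir_path_decomp_narrower[OF assms Xs(1)] by blast
  then show ?thesis using dpw_le Xs(2) by fastforce
qed

theorem lemma3p9:
  fixes G H :: "'a digraph"
  assumes "dcograph G" and "dcograph H" and "verts G \<inter> verts H = {}"
  shows "pw (un (order_comp G H)) > dpw (order_comp G H)"
  by (rule dpw_order_comp_less_pw_un)
     (simp_all add: assms dcograph_finite dcograph_nonempty dcograph_arcs_subset)

end
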